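(* Let $(M,\widetilde B)$ be a strict root of unity quantum seed with respect to a skew-symmetric integer matrix $\Lambda\in M_N(\mathbb Z)$, and let $k\in\mathrm{ex}$ and $s\in\{+,-\}$. Then $\mu_k(M,\widetilde B)$ is also a strict root of unity quantum seed, with respect to the skew-symmetric integer matrix $\Lambda'=E_s^\top\Lambda E_s$.
   Context: Let $\ell$ be a positive integer, $\mathbb Z_\ell=\mathbb Z/\ell\mathbb Z$, $\varepsilon^{1/2}\in\mathbb C$ a primitive $\ell$-th root of unity, $\mathcal A^{1/2}_\varepsilon=\mathbb Z[\varepsilon^{1/2}]$, $\varepsilon^{a/2}=(\varepsilon^{1/2})^a$ for $a\in\mathbb Z_\ell$; $\overline C$ is the reduction mod $\ell$ of an integer matrix $C$; $e_1,\dots,e_N$ is the standard basis of $\mathbb Z^N$. For a skew-symmetric bilinear form $\Lambda:\mathbb Z^N\times\mathbb Z^N\to\mathbb Z_\ell$ with matrix $(\lambda_{ij})$, $\mathcal T_\varepsilon(\Lambda)$ is the $\mathcal A^{1/2}_\varepsilon$-algebra with basis $\{X^f\}_{f\in\mathbb Z^N}$ and $X^fX^g=\varepsilon^{\Lambda(f,g)/2}X^{f+g}$. A root of unity toric frame of a division algebra $\mathcal F$ over $\mathbb Q(\varepsilon^{1/2})$ is a map $M:\mathbb Z^N\to\mathcal F$ such that for some (unique) skew-symmetric $\Lambda=:\Lambda_M$ there is an injective $\mathcal A^{1/2}_\varepsilon$-algebra map $\phi:\mathcal T_\varepsilon(\Lambda)\to\mathcal F$, $\phi(X^f)=M(f)$,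 with $\mathcal F$ the skew field of fractions of its image. Fix $\mathrm{ex}\subseteq[1,N]$. An exchange matrix $\widetilde B=(b_{ij})$ is an integer matrix with rows indexed by $[1,N]$, columns by $\mathrm{ex}$, principal part $B$, $k$-th column $b^k$. $(\Lambda,\widetilde B)$ (with $\Lambda$ over $\mathbb Z_\ell$) is $\ell$-compatible with respect to $D=\mathrm{diag}(d_j)_{j\in\mathrm{ex}}$, $d_j\in\mathbb Z_{>0}$, if $DB$ is skew-symmetric and $\sum_k\overline b_{kj}\lambda_{ki}=\delta_{ij}\overline d_j$ in $\mathbb Z_\ell$ for all $i\in[1,N]$, $j\in\mathrm{ex}$; a root of unity quantum seed is $(M,\widetilde B)$ with $(\Lambda_M,\widetilde B)$ $\ell$-compatible. A pair $(\Lambda,\widetilde B)$ with $\Lambda=(\lambda_{ij})\in M_N(\mathbb Z)$ skew-symmetric is compatible with respect to $D$ if $\sum_k b_{kj}\lambda_{ki}=\delta_{ij}d_j$ for all $i\in[1,N]$, $j\in\mathrm{ex}$. A root of unity quantum seed $(M,\widetilde B)$, $\ell$-compatible w.r.t. $D$, is strict with respect to a skew-symmetric $\Lambda\in M_N(\mathbb Z)$ if $\overline\Lambda=\Lambda_M$ and $(\Lambda,\widetilde B)$ is compatible with respect to the same $D$. For a sign $s$, $E_s=(e_{ij})\in M_N(\mathbb Z)$ has $e_{ij}=\delta_{ij}$ for $j\ne k$, $e_{kk}=-1$, $e_{ik}=\max(0,-sb_{ik})$ for $i\ne k$. For $b\in\mathbb Z^N$, $[b]_\pm$ keeps the entries $b_i$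 with $\pm b_i\ge0$ and sets the others to $0$. Mutation: $\mu_k(\widetilde B)=(b'_{ij})$, $b'_{ij}=-b_{ij}$ if $i=k$ or $j=k$, otherwise $b'_{ij}=b_{ij}+(|b_{ik}|b_{kj}+b_{ik}|b_{kj}|)/2$; $\mu_k(M)$ is the root of unity toric frame with matrix $\overline E_s^\top\Lambda_M\overline E_s$ (independent of $s$) and $\mu_k(M)(e_j)=M(e_j)$ ($j\ne k$), $\mu_k(M)(e_k)=M(-e_k+[b^k]_+)+M(-e_k-[b^k]_-)$. *)

theory Defs
  imports "HOL-Number_Theory.Cong"
begin

text \<open>Indices range over [1,N] (naturals). Integer matrices are functions
  nat \<Rightarrow> nat \<Rightarrow> int (entries outside the relevant index ranges are irrelevant).
  An element of Z_l is represented by an integer; equality in Z_l is congruence mod l.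
  The exchange matrix B has rows in [1,N] and columns in ex; D = diag(d j), j in ex.
  Signs s in {+,-} are represented by the integers 1 and -1.\<close>

definition skew_int :: "nat \<Rightarrow> (nat \<Rightarrow> nat \<Rightarrow> int) \<Rightarrow> bool" where
  "skew_int N Lam \<longleftrightarrow> (\<forall>i\<in>{1..N}. \<forall>j\<in>{1..N}. Lam i j = - Lam j i)"

definition skew_mod :: "nat \<Rightarrow> nat \<Rightarrow> (nat \<Rightarrow> nat \<Rightarrow> int) \<Rightarrow> bool" where
  "skew_mod l N L \<longleftrightarrow> (\<forall>i\<in>{1..N}. \<forall>j\<in>{1..N}. [L i j = - L j i] (mod int l))"

definition DB_skew :: "nat set \<Rightarrow> (nat \<Rightarrow> nat \<Rightarrow> int) \<Rightarrow> (nat \<Rightarrow> int) \<Rightarrow> bool" where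
  "DB_skew ex B d \<longleftrightarrow> (\<forall>i\<in>ex. \<forall>j\<in>ex. d i * B i j = - (d j * B j i))"

definition l_compatible ::
  "nat \<Rightarrow> nat \<Rightarrow> nat set \<Rightarrow> (nat \<Rightarrow> nat \<Rightarrow> int) \<Rightarrow> (nat \<Rightarrow> nat \<Rightarrow> int) \<Rightarrow> (nat \<Rightarrow> int) \<Rightarrow> bool" where
  "l_compatible l N ex L B d \<longleftrightarrow>
     (\<forall>j\<in>ex. d j > 0) \<and> DB_skew ex B d \<and>
     (\<forall>i\<in>{1..N}. \<forall>j\<in>ex.
        [(\<Sum>k=1..N. B k j * L k i) = (if i = j then d j else 0)] (mod int l))"

definition compatible ::
  "nat \<Rightarrow> nat set \<Rightarrow> (nat \<Rightarrow> nat \<Rightarrow> int) \<Rightarrow> (nat \<Rightarrow> nat \<Rightarrow> int) \<Rightarrow> (nat \<Rightarrow> int) \<Rightarrow> bool" where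
  "compatible N ex Lam B d \<longleftrightarrow>
     (\<forall>i\<in>{1..N}. \<forall>j\<in>ex. (\<Sum>k=1..N. B k j * Lam k i) = (if i = j then d j else 0))"

text \<open>A root of unity quantum seed, recorded through the matrix L = Lambda_M of its toric
  frame (a skew-symmetric Z_l-valued form) and its exchange matrix B.\<close>
definition rou_seed ::
  "nat \<Rightarrow> nat \<Rightarrow> nat set \<Rightarrow> (nat \<Rightarrow> nat \<Rightarrow> int) \<Rightarrow> (nat \<Rightarrow> nat \<Rightarrow> int) \<Rightarrow> (nat \<Rightarrow> int) \<Rightarrow> bool" where
  "rou_seed l N ex L B d \<longleftrightarrow> skew_mod l N L \<and> l_compatible l N ex L B d"

definition strict_seed ::
  "nat \<Rightarrow> nat \<Rightarrow> nat set \<Rightarrow> (nat \<Rightarrow> nat \<Rightarrow> int) \<Rightarrow> (nat \<Rightarrow> nat \<Rightarrow> int) \<Rightarrow> (nat \<Rightarrow> int)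
     \<Rightarrow> (nat \<Rightarrow> nat \<Rightarrow> int) \<Rightarrow> bool" where
  "strict_seed l N ex L B d Lam \<longleftrightarrow>
     rou_seed l N ex L B d \<and> skew_int N Lam \<and>
     (\<forall>i\<in>{1..N}. \<forall>j\<in>{1..N}. [Lam i j = L i j] (mod int l)) \<and>
     compatible N ex Lam B d"

definition Emat :: "int \<Rightarrow> nat \<Rightarrow> (nat \<Rightarrow> nat \<Rightarrow> int) \<Rightarrow> nat \<Rightarrow> nat \<Rightarrow> int" where
  "Emat s k B i j =
     (if j \<noteq> k then (if i = j then 1 else 0)
      else if i = k then -1 else max 0 (- s * B i k))"

definition congr_mat :: "nat \<Rightarrow> (nat \<Rightarrow> nat \<Rightarrow> int) \<Rightarrow> (nat \<Rightarrow> nat \<Rightarrow> int) \<Rightarrow> nat \<Rightarrow> nat \<Rightarrow> int" where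
  "congr_mat N C A i j = (\<Sum>a=1..N. \<Sum>b=1..N. C a i * A a b * C b j)"

definition mut_B :: "nat \<Rightarrow> (nat \<Rightarrow> nat \<Rightarrow> int) \<Rightarrow> nat \<Rightarrow> nat \<Rightarrow> int" where
  "mut_B k B i j =
     (if i = k \<or> j = k then - B i j
      else B i j + (\<bar>B i k\<bar> * B k j + B i k * \<bar>B k j\<bar>) div 2)"

text \<open>Matrix (over Z_l, integer representatives) of the mutated toric frame mu_k(M):
  E_s^T Lambda_M E_s reduced mod l, taken here with s = + (it is independent of s).\<close>
definition mut_frame_mat :: "nat \<Rightarrow> nat \<Rightarrow> (nat \<Rightarrow> nat \<Rightarrow> int) \<Rightarrow> (nat \<Rightarrow> nat \<Rightarrow> int) \<Rightarrow> nat \<Rightarrow> nat \<Rightarrow> int" where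
  "mut_frame_mat N k B L = congr_mat N (Emat 1 k B) L"

end

theory Submission
  imports Defs
begin

(* Skew-symmetry and agreement mod l are preserved by the congruence Lambda |-> E^T Lambda E, so
   everything reduces to statements over the integers. For compatibility, E_s mu_k(B) = B F_s,
   hence mu_k(B)^T E_s^T Lambda E_s = F_s^T (B^T Lambda) E_s = F_s^T D E_s = D, the last step
   using that D B is skew-symmetric. The frame of mu_k(M) is defined with E_+; the columns k of
   E_+ and E_- differ by -b^k, and since (b^k)^T Lambda = d_k e_k^T the two rank-one correction
   terms of the congruence cancel. *)

definition mat_mult :: "nat \<Rightarrow> (nat \<Rightarrow> nat \<Rightarrow> 'a::comm_semiring_1) \<Rightarrow> (nat \<Rightarrow> nat \<Rightarrow> 'a)
    \<Rightarrow> nat \<Rightarrow> nat \<Rightarrow> 'a" where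
  "mat_mult N A C i j = (\<Sum>m=1..N. A i m * C m j)"

definition transpose_mat :: "(nat \<Rightarrow> nat \<Rightarrow> 'a) \<Rightarrow> nat \<Rightarrow> nat \<Rightarrow> 'a" where
  "transpose_mat A i j = A j i"

lemma mat_mult_assoc: "mat_mult N (mat_mult N A C) D = mat_mult N A (mat_mult N C D)"
proof (intro ext)
  fix i j
  have "mat_mult N (mat_mult N A C) D i j = (\<Sum>p=1..N. \<Sum>m=1..N. A i m * C m p * D p j)"
    by (simp add: mat_mult_def sum_distrib_right)
  also have "\<dots> = (\<Sum>m=1..N. \<Sum>p=1..N. A i m * C m p * D p j)"
    by (rule sum.swap)
  also have "\<dots> = mat_mult N A (mat_mult N C D) i j"
    by (simp add: mat_mult_def sum_distrib_left mult.assoc)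
  finally show "mat_mult N (mat_mult N A C) D i j = mat_mult N A (mat_mult N C D) i j" .
qed

lemma transpose_mat_mult:
  "transpose_mat (mat_mult N A C) = mat_mult N (transpose_mat C) (transpose_mat A)"
  by (simp add: fun_eq_iff transpose_mat_def mat_mult_def mult.commute)

lemma mat_mult_row_cong:
  assumes "\<And>m. m \<in> {1..N} \<Longrightarrow> A i m = A' i m"
  shows "mat_mult N A C i j = mat_mult N A' C i j"
  using assms by (simp add: mat_mult_def)

lemma congr_mat_eq_mat_mult:
  "congr_mat N C A = mat_mult N (mat_mult N (transpose_mat C) A) C"
  unfolding fun_eq_iff congr_mat_def mat_mult_def transpose_mat_def sum_distrib_right
  by (subst sum.swap) (rule allI refl)+

lemma skew_form_swap:
  assumes "skew_int N Lam"
  shows "(\<Sum>a=1..N. \<Sum>b=1..N. x a * Lam a b * y b) = - (\<Sum>a=1..N. \<Sum>b=1..N. y a * Lam a b * x b)"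
proof -
  have "(\<Sum>a=1..N. \<Sum>b=1..N. x a * Lam a b * y b) = (\<Sum>a=1..N. \<Sum>b=1..N. - (y b * Lam b a * x a))"
  proof (intro sum.cong refl)
    fix a b assume "a \<in> {1..N}" "b \<in> {1..N}"
    then have "Lam a b = - Lam b a" using assms unfolding skew_int_def by blast
    then show "x a * Lam a b * y b = - (y b * Lam b a * x a)" by simp
  qed
  also have "\<dots> = - (\<Sum>a=1..N. \<Sum>b=1..N. y a * Lam a b * x b)"
    by (subst sum.swap) (simp add: sum_negf)
  finally show ?thesis .
qed

lemma skew_int_congr_mat:
  assumes "skew_int N Lam"
  shows "skew_int N (congr_mat N C Lam)"
  unfolding skew_int_def congr_mat_def by (intro ballI skew_form_swap[OF assms])

lemma congr_mat_cong_mod: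
  assumes "\<forall>a\<in>{1..N}. \<forall>b\<in>{1..N}. [A a b = A' a b] (mod n)"
  shows "[congr_mat N C A i j = congr_mat N C A' i j] (mod n)"
  unfolding congr_mat_def by (intro cong_sum cong_mult cong_refl) (use assms in blast)

lemma congr_mat_add_column:
  fixes C Lam :: "nat \<Rightarrow> nat \<Rightarrow> int" and u :: "nat \<Rightarrow> int"
  assumes skew: "skew_int N Lam"
    and u: "\<And>j. j \<in> {1..N} \<Longrightarrow> (\<Sum>a=1..N. \<Sum>b=1..N. u a * Lam a b * C b j) = (if j = k then c else 0)"
    and i: "i \<in> {1..N}" and j: "j \<in> {1..N}"
  shows "congr_mat N (\<lambda>a b. C a b + (if b = k then u a else 0)) Lam i j = congr_mat N C Lam i j"
proof -
  let ?uC = "\<lambda>j. \<Sum>a=1..N. \<Sum>b=1..N. u a * Lam a b * C b j"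
  let ?Cu = "\<lambda>i. \<Sum>a=1..N. \<Sum>b=1..N. C a i * Lam a b * u b"
  let ?uu = "\<Sum>a=1..N. \<Sum>b=1..N. u a * Lam a b * u b"
  have "congr_mat N (\<lambda>a b. C a b + (if b = k then u a else 0)) Lam i j
      = congr_mat N C Lam i j + (if j = k then ?Cu i else 0) + (if i = k then ?uC j else 0)
        + (if i = k \<and> j = k then ?uu else 0)"
    unfolding congr_mat_def
    by (cases "i = k"; cases "j = k") (simp_all add: algebra_simps sum.distrib)
  moreover have "?Cu i = - ?uC i" "?uu = 0"
    using skew_form_swap[OF skew, of "\<lambda>a. C a i" u] skew_form_swap[OF skew, of u u] by simp_all
  ultimately show ?thesis
    using u[OF i] u[OF j] by auto
qed

lemma strict_seedI:
  assumes skew: "skew_int N Lam" and comp: "compatible N ex Lam B d"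
    and "\<forall>j\<in>ex. d j > 0" and "DB_skew ex B d"
    and cong: "\<forall>i\<in>{1..N}. \<forall>j\<in>{1..N}. [Lam i j = L i j] (mod int l)"
  shows "strict_seed l N ex L B d Lam"
proof -
  have "skew_mod l N L"
    unfolding skew_mod_def
  proof (intro ballI)
    fix i j assume "i \<in> {1..N}" "j \<in> {1..N}"
    then have "[L i j = Lam i j] (mod int l)" "[- Lam j i = - L j i] (mod int l)"
      using cong by (simp_all add: cong_sym cong_minus_minus_iff)
    moreover have "Lam i j = - Lam j i"
      using skew \<open>i \<in> {1..N}\<close> \<open>j \<in> {1..N}\<close> unfolding skew_int_def by blast
    ultimately show "[L i j = - L j i] (mod int l)" by (metis cong_trans)
  qed
  moreover have "[(\<Sum>m=1..N. B m j * L m i) = (if i = j then d j else 0)] (mod int l)"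
    if "i \<in> {1..N}" "j \<in> ex" for i j
  proof -
    have "[(\<Sum>m=1..N. B m j * L m i) = (\<Sum>m=1..N. B m j * Lam m i)] (mod int l)"
      by (intro cong_sum cong_mult cong_refl) (use cong that in \<open>auto intro: cong_sym\<close>)
    then show ?thesis using comp that by (simp add: compatible_def)
  qed
  ultimately show ?thesis
    using assms by (simp add: strict_seed_def rou_seed_def l_compatible_def)
qed

lemma Emat_plus_eq_Emat_minus:
  assumes "B k k = 0"
  shows "Emat 1 k B = (\<lambda>a b. Emat (-1) k B a b + (if b = k then - B a k else 0))"
  using assms by (auto simp: fun_eq_iff Emat_def max_def)

lemma congr_mat_Emat_sign_indep:
  assumes skew: "skew_int N Lam" and comp: "compatible N ex Lam B d"
    and k: "k \<in> ex" "k \<in> {1..N}" and Bkk: "B k k = 0" and s: "s \<in> {1, -1}"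
    and i: "i \<in> {1..N}" and j: "j \<in> {1..N}"
  shows "congr_mat N (Emat s k B) Lam i j = congr_mat N (Emat 1 k B) Lam i j"
proof (cases "s = 1")
  case False
  then have s: "s = -1" using s by simp
  have "(\<Sum>a=1..N. \<Sum>b=1..N. - B a k * Lam a b * Emat (-1) k B b m) = (if m = k then d k else 0)"
    if "m \<in> {1..N}" for m
  proof -
    have "(\<Sum>a=1..N. \<Sum>b=1..N. - B a k * Lam a b * Emat (-1) k B b m)
        = - (\<Sum>b=1..N. (\<Sum>a=1..N. B a k * Lam a b) * Emat (-1) k B b m)"
      by (subst sum.swap) (simp add: sum_distrib_right sum_negf)
    also have "\<dots> = - (\<Sum>b=1..N. (if b = k then d k else 0) * Emat (-1) k B b m)"
      using comp k(1) by (simp add: compatible_def)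
    also have "\<dots> = (if m = k then d k else 0)"
      using k(2) by (simp add: Emat_def if_distrib[of "\<lambda>x. x * _"] cong: if_cong)
    finally show ?thesis .
  qed
  then show ?thesis
    unfolding s Emat_plus_eq_Emat_minus[where B = B and k = k, OF Bkk]
    by (intro congr_mat_add_column[OF skew _ i j, symmetric]) simp
qed simp

lemma DB_skew_diag_zero:
  assumes "DB_skew ex B d" and "k \<in> ex" and "d k > 0"
  shows "B k k = 0"
  using assms by (force simp: DB_skew_def)

lemma DB_skew_abs:
  assumes "DB_skew ex B d" and "i \<in> ex" "k \<in> ex" and "\<forall>j\<in>ex. d j > 0"
  shows "d i * \<bar>B i k\<bar> = d k * \<bar>B k i\<bar>"
proof -
  have "d i * B i k = - (d k * B k i)"
    using assms(1-3) unfolding DB_skew_def by blast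
  then have "\<bar>d i * B i k\<bar> = \<bar>d k * B k i\<bar>"
    by simp
  moreover have "d i > 0" "d k > 0"
    using assms(2-4) by auto
  ultimately show ?thesis by (simp add: abs_mult)
qed

lemma DB_skew_max:
  assumes db: "DB_skew ex B d" and dpos: "\<forall>j\<in>ex. d j > 0" and j: "j \<in> ex" and k: "k \<in> ex"
  shows "d j * max 0 (- s * B j k) = d k * max 0 (s * B k j)"
proof -
  have pos: "d j > 0" "d k > 0" using dpos j k by auto
  have "d j * B j k = - (d k * B k j)" using db j k unfolding DB_skew_def by blast
  then have "d j * (- s * B j k) = d k * (s * B k j)"
    by (simp add: algebra_simps)
  then show ?thesis
    using pos by (simp add: max_mult_distrib_left)
qed

lemma even_abs_mult_add_mult_abs: "even (\<bar>x\<bar> * y + x * \<bar>y\<bar> :: int)"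
  by (cases "x \<ge> 0"; cases "y \<ge> 0") auto

lemma DB_skew_mut_B:
  assumes db: "DB_skew ex B d" and dpos: "\<forall>j\<in>ex. d j > 0" and k: "k \<in> ex"
  shows "DB_skew ex (mut_B k B) d"
  unfolding DB_skew_def
proof (intro ballI)
  fix i j assume i: "i \<in> ex" and j: "j \<in> ex"
  have dbij: "d i * B i j = - (d j * B j i)"
    using db i j unfolding DB_skew_def by blast
  show "d i * mut_B k B i j = - (d j * mut_B k B j i)"
  proof (cases "i = k \<or> j = k")
    case True
    then show ?thesis using dbij by (auto simp: mut_B_def)
  next
    case False
    define X where "X a b = \<bar>B a k\<bar> * B k b + B a k * \<bar>B k b\<bar>" for a b
    have sk: "d i * B i k = - (d k * B k i)" "d k * B k j = - (d j * B j k)"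
      using db i j k unfolding DB_skew_def by blast+
    have sk_abs: "d i * \<bar>B i k\<bar> = d k * \<bar>B k i\<bar>" "d k * \<bar>B k j\<bar> = d j * \<bar>B j k\<bar>"
      using DB_skew_abs[OF db] i j k dpos by blast+
    have "d i * X i j = (d i * \<bar>B i k\<bar>) * B k j + (d i * B i k) * \<bar>B k j\<bar>"
      by (simp add: X_def algebra_simps)
    also have "\<dots> = \<bar>B k i\<bar> * (d k * B k j) - B k i * (d k * \<bar>B k j\<bar>)"
      by (simp add: sk(1) sk_abs(1) algebra_simps)
    also have "\<dots> = - (d j * X j i)"
      by (simp add: sk(2) sk_abs(2) X_def algebra_simps)
    finally have X_skew: "d i * X i j = - (d j * X j i)" .
    obtain h h' where h: "X i j = 2 * h" and h': "X j i = 2 * h'"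
      using even_abs_mult_add_mult_abs unfolding X_def by (meson evenE)
    have "2 * (d i * h) = 2 * (- (d j * h'))"
      using X_skew unfolding h h' by (simp add: mult.left_commute)
    then have "d i * h = - (d j * h')"
      by linarith
    moreover have "mut_B k B i j = B i j + h" "mut_B k B j i = B j i + h'"
      using False h h' unfolding X_def by (simp_all add: mut_B_def)
    ultimately show ?thesis
      using dbij by (simp add: distrib_left)
  qed
qed

lemma mutation_term_eq:
  fixes x y s :: int
  assumes "s \<in> {1, -1}"
  shows "(\<bar>x\<bar> * y + x * \<bar>y\<bar>) div 2 = max 0 (- s * x) * y + x * max 0 (s * y)"
  using assms by (cases "x \<ge> 0"; cases "y \<ge> 0") (auto simp: max_def)

(* The matrix F_s of Berenstein-Zelevinsky: mu_k(B) = E_s B F_s. *)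
definition Fmat :: "int \<Rightarrow> nat \<Rightarrow> (nat \<Rightarrow> nat \<Rightarrow> int) \<Rightarrow> nat \<Rightarrow> nat \<Rightarrow> int" where
  "Fmat s k B i j =
     (if i \<noteq> k then (if i = j then 1 else 0)
      else if j = k then -1 else max 0 (s * B k j))"

lemma mat_mult_Emat_left:
  assumes "a \<in> {1..N}" "k \<in> {1..N}"
  shows "mat_mult N (Emat s k B) X a j
    = (if a = k then - X k j else X a j + max 0 (- s * B a k) * X k j)"
proof -
  have "mat_mult N (Emat s k B) X a j
      = (\<Sum>m=1..N. (if m = a then X m j else 0)
          + (if m = k then (if a = k then -2 else max 0 (- s * B a k)) * X k j else 0))"
    unfolding mat_mult_def by (intro sum.cong refl) (auto simp: Emat_def)
  then show ?thesis
    using assms by (simp add: sum.distrib)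
qed

lemma mat_mult_Fmat_right:
  assumes "j \<in> {1..N}" "k \<in> {1..N}"
  shows "mat_mult N X (Fmat s k B) a j
    = (if j = k then - X a k else X a j + X a k * max 0 (s * B k j))"
proof -
  have "mat_mult N X (Fmat s k B) a j
      = (\<Sum>m=1..N. (if m = j then X a m else 0)
          + (if m = k then X a k * (if j = k then -2 else max 0 (s * B k j)) else 0))"
    unfolding mat_mult_def by (intro sum.cong refl) (auto simp: Fmat_def)
  then show ?thesis
    using assms by (simp add: sum.distrib)
qed

lemma Emat_mult_mut_B:
  assumes "a \<in> {1..N}" "j \<in> {1..N}" "k \<in> {1..N}" and "B k k = 0" and "s \<in> {1, -1}"
  shows "mat_mult N (Emat s k B) (mut_B k B) a j = mat_mult N B (Fmat s k B) a j"
  using assms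
  by (simp add: mat_mult_Emat_left mat_mult_Fmat_right) (auto simp: mut_B_def mutation_term_eq)

lemma Fmat_transpose_compatible:
  assumes comp: "compatible N ex Lam B d" and j: "j \<in> ex" and k: "k \<in> ex" and b: "b \<in> {1..N}"
  shows "mat_mult N (transpose_mat (Fmat s k B)) (mat_mult N (transpose_mat B) Lam) j b
    = Fmat s k B b j * d b"
proof -
  have "Fmat s k B c j * (\<Sum>a=1..N. B a c * Lam a b) = Fmat s k B c j * (if b = c then d c else 0)" for c
  proof (cases "c = j \<or> c = k")
    case True
    then have "c \<in> ex" using j k by blast
    then show ?thesis using comp b by (simp add: compatible_def)
  next
    case False
    then show ?thesis by (simp add: Fmat_def)
  qed
  then have "mat_mult N (transpose_mat (Fmat s k B)) (mat_mult N (transpose_mat B) Lam) j b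
      = (\<Sum>c=1..N. Fmat s k B c j * (if b = c then d c else 0))"
    unfolding mat_mult_def transpose_mat_def by (intro sum.cong refl) simp
  also have "\<dots> = Fmat s k B b j * d b"
    using b by (simp add: if_distrib[of "\<lambda>x. _ * x"] cong: if_cong)
  finally show ?thesis .
qed

lemma Fmat_diag_Emat:
  assumes db: "DB_skew ex B d" and dpos: "\<forall>j\<in>ex. d j > 0" and ex: "ex \<subseteq> {1..N}"
    and j: "j \<in> ex" and k: "k \<in> ex" and i: "i \<in> {1..N}"
  shows "mat_mult N (\<lambda>j b. Fmat s k B b j * d b) (Emat s k B) j i = (if i = j then d j else 0)"
proof -
  have jk: "j \<in> {1..N}" "k \<in> {1..N}" using ex j k by auto
  have "mat_mult N (\<lambda>j b. Fmat s k B b j * d b) (Emat s k B) j i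
      = (\<Sum>b=1..N. (if b = j then (if j = k then -1 else 1) * d j * Emat s k B j i else 0)
          + (if b = k \<and> j \<noteq> k then max 0 (s * B k j) * d k * Emat s k B k i else 0))"
    unfolding mat_mult_def by (intro sum.cong refl) (auto simp: Fmat_def)
  also have "\<dots> = (if j = k then -1 else 1) * d j * Emat s k B j i
      + (if j \<noteq> k then max 0 (s * B k j) * d k * Emat s k B k i else 0)"
    using jk by (simp add: sum.distrib)
  also have "\<dots> = (if i = j then d j else 0)"
    using DB_skew_max[OF db dpos j k, of s] by (auto simp: Emat_def)
  finally show ?thesis .
qed

lemma compatible_mutation:
  assumes ex: "ex \<subseteq> {1..N}" and k: "k \<in> ex" and s: "s \<in> {1, -1}"
    and dpos: "\<forall>j\<in>ex. d j > 0" and db: "DB_skew ex B d" and comp: "compatible N ex Lam B d"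
  shows "compatible N ex (congr_mat N (Emat s k B) Lam) (mut_B k B) d"
  unfolding compatible_def
proof (intro ballI)
  fix i j assume i: "i \<in> {1..N}" and j: "j \<in> ex"
  let ?E = "Emat s k B" and ?F = "Fmat s k B" and ?T = transpose_mat
  have jN: "j \<in> {1..N}" and kN: "k \<in> {1..N}"
    using ex j k by auto
  have Bkk: "B k k = 0"
    using DB_skew_diag_zero[OF db k] dpos k by blast
  have EB: "mat_mult N (?T (mut_B k B)) (?T ?E) j a = mat_mult N (?T ?F) (?T B) j a"
    if "a \<in> {1..N}" for a
    using Emat_mult_mut_B[where B = B, OF that jN kN Bkk s]
    by (simp add: transpose_mat_mult[symmetric] transpose_mat_def)
  have "(\<Sum>m=1..N. mut_B k B m j * congr_mat N ?E Lam m i)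
      = mat_mult N (mat_mult N (mat_mult N (?T (mut_B k B)) (?T ?E)) Lam) ?E j i"
    by (simp add: congr_mat_eq_mat_mult mat_mult_assoc) (simp add: mat_mult_def transpose_mat_def)
  also have "\<dots> = mat_mult N (mat_mult N (mat_mult N (?T ?F) (?T B)) Lam) ?E j i"
    by (intro mat_mult_row_cong EB)
  also have "\<dots> = mat_mult N (mat_mult N (?T ?F) (mat_mult N (?T B) Lam)) ?E j i"
    by (simp add: mat_mult_assoc)
  also have "\<dots> = mat_mult N (\<lambda>j b. ?F b j * d b) ?E j i"
    by (intro mat_mult_row_cong Fmat_transpose_compatible[OF comp j k])
  also have "\<dots> = (if i = j then d j else 0)"
    by (rule Fmat_diag_Emat[OF db dpos ex j k i])
  finally show "(\<Sum>m=1..N. mut_B k B m j * congr_mat N ?E Lam m i) = (if i = j then d j else 0)" .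
qed

theorem proposition5p2:
  fixes l N k :: nat and ex :: "nat set" and L Lam B :: "nat \<Rightarrow> nat \<Rightarrow> int"
    and d :: "nat \<Rightarrow> int" and s :: int
  assumes "l > 0" and "ex \<subseteq> {1..N}"
    and "strict_seed l N ex L B d Lam"
    and "k \<in> ex" and "s \<in> {1, -1}"
  shows "strict_seed l N ex (mut_frame_mat N k B L) (mut_B k B) d
           (congr_mat N (Emat s k B) Lam)"
proof -
  from assms(3) have skew: "skew_int N Lam" and comp: "compatible N ex Lam B d"
    and cong: "\<forall>i\<in>{1..N}. \<forall>j\<in>{1..N}. [Lam i j = L i j] (mod int l)"
    and dpos: "\<forall>j\<in>ex. d j > 0" and db: "DB_skew ex B d"
    by (simp_all add: strict_seed_def rou_seed_def l_compatible_def)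
  have kN: "k \<in> {1..N}"
    using assms(2,4) by blast
  have Bkk: "B k k = 0"
    using DB_skew_diag_zero[OF db assms(4)] dpos assms(4) by blast
  have "[congr_mat N (Emat s k B) Lam i j = mut_frame_mat N k B L i j] (mod int l)"
    if "i \<in> {1..N}" "j \<in> {1..N}" for i j
    using congr_mat_Emat_sign_indep[OF skew comp assms(4) kN Bkk assms(5) that]
      congr_mat_cong_mod[OF cong]
    by (simp add: mut_frame_mat_def)
  then show ?thesis
    using skew_int_congr_mat[OF skew] compatible_mutation[OF assms(2,4,5) dpos db comp]
      DB_skew_mut_B[OF db dpos assms(4)] dpos
    by (intro strict_seedI) auto
qed

end
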